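(* Let $\mathcal F$ be a filtration sequence, $E=(E_{m,n})_{m,n\in\mathbb N}$ a nonnegative process adapted to $\mathcal F$, and $r=(r_m)_{m\in\mathbb N}$ an extended integer sequence. The following are equivalent: (i) $E$ is an $r$-asymptotic e-process for $\mathcal P$ and $\mathcal F$; (ii) for every $\tau=(\tau_m)_{m\in\mathbb N}\in\mathcal T_{\mathrm{fin}}(r,\mathcal F,\mathcal P)$, $\limsup_{m\to\infty}\sup_{P\in\mathcal P}\mathbb E_P[E_{m,\tau_m}]\le 1$; (iii) there exists a family $(L^P_{m,n})_{(m,n,P)\in\mathbb N\times\mathbb N\times\mathcal P}$ of nonnegative random variables, with $L^P_{m,\bullet}$ adapted to $\mathcal F_{m,\bullet}$, and some $m_0\in\mathbb N$ such that: (a) $L^P_{m,n}\ge E_{m,n}$ $P$-a.s. for all $m,n\in\mathbb N$ and $P\in\mathcal P$; (b) $L^P_{m,n}$ is $P$-integrable for all $m\ge m_0$, all $n\in\mathbb N$ with $n\le r_m$, and all $P\in\mathcal P$; (c) for all $m\ge m_0$, all $P\in\mathcal P$ and all $n\in\mathbb N$ with $n\le r_m-1$, $\mathbb E_P[L^P_{m,n+1}\mid\mathcal F_{m,n}]\le L^P_{m,n}$ $P$-a.s.; (d) $\limsup_{m\to\infty}\sup_{P\in\mathcal P}\mathbb E_P[L^P_{m,0}]\le 1$.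
   Context: $(\Omega,\mathcal A)$ is a measurable space and $\mathcal P$ a set of probability measures on it. $\mathbb N=\{0,1,\dots\}$; an extended integer is an element of $\mathbb N\cup\{\infty\}$ (with $\infty-1=\infty$). Nonnegative random variables take values in $[0,\infty]$ with $\mathbb E_P[X]:=\infty$ if not $P$-integrable. For a process $(X_n)$, $X_\infty:=\limsup_n X_n$ pointwise (so $E_{m,\tau}$ is defined when $\tau=\infty$). A filtration sequence is a family $(\mathcal F_{m,n})_{m,n\in\mathbb N}$ of sub-$\sigma$-algebras of $\mathcal A$ such that each $\mathcal F_{m,\bullet}$ is a filtration; adapted means $E_{m,n}$ is $\mathcal F_{m,n}$-measurable. For a filtration $\mathcal G$ and $\rho\in\mathbb N\cup\{\infty\}$, $\mathcal T(\rho,\mathcal G,\mathcal P)$ is the set of $\mathcal G$-stopping times $\tau$ (values in $\mathbb N\cup\{\infty\}$) with $P[\tau\le\rho]=1$ for all $P\in\mathcal P$, and $\mathcal T_{\mathrm{fin}}(\rho,\mathcal G,\mathcal P)$ its subset of stopping times finite at every $\omega$. $\mathcal T(r,\mathcal F,\mathcal P)$ (resp. $\mathcal T_{\mathrm{fin}}(r,\mathcal F,\mathcal P)$) is the set of sequences $(\tau_m)$ with $\tau_m\in\mathcal T(r_m,\mathcal F_{m,\bullet},\mathcal P)$ (resp. $\mathcal T_{\mathrm{fin}}(r_m,\mathcal F_{m,\bullet},\mathcal P)$). A nonnegative adapted process $E$ is an $r$-asymptotic e-process if for every $\tau\in\mathcal T(r,\mathcal F,\mathcal P)$, $\limsup_{m\to\infty}\sup_{P\in\mathcal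 P}\mathbb E_P[E_{m,\tau_m}]\le 1$. *)

theory Defs
  imports "HOL-Probability.Probability"
begin

definition filtration_seq :: "'a measure \<Rightarrow> (nat \<Rightarrow> nat \<Rightarrow> 'a measure) \<Rightarrow> bool" where
  "filtration_seq M F \<longleftrightarrow>
     (\<forall>m n. subalgebra M (F m n)) \<and> (\<forall>m n. sets (F m n) \<subseteq> sets (F m (Suc n)))"

definition adapted_seq :: "(nat \<Rightarrow> nat \<Rightarrow> 'a measure) \<Rightarrow> (nat \<Rightarrow> nat \<Rightarrow> 'a \<Rightarrow> ennreal) \<Rightarrow> bool" where
  "adapted_seq F E \<longleftrightarrow> (\<forall>m n. E m n \<in> borel_measurable (F m n))"

definition is_stopping_time :: "'a measure \<Rightarrow> (nat \<Rightarrow> 'a measure) \<Rightarrow> ('a \<Rightarrow> enat) \<Rightarrow> bool" where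
  "is_stopping_time M G \<tau> \<longleftrightarrow> (\<forall>n::nat. {\<omega> \<in> space M. \<tau> \<omega> \<le> enat n} \<in> sets (G n))"

definition ST :: "'a measure \<Rightarrow> 'a measure set \<Rightarrow> (nat \<Rightarrow> 'a measure) \<Rightarrow> enat \<Rightarrow> ('a \<Rightarrow> enat) set" where
  "ST M Ps G \<rho> = {\<tau>. is_stopping_time M G \<tau> \<and>
       (\<forall>P\<in>Ps. emeasure P {\<omega> \<in> space M. \<tau> \<omega> \<le> \<rho>} = 1)}"

definition ST_fin :: "'a measure \<Rightarrow> 'a measure set \<Rightarrow> (nat \<Rightarrow> 'a measure) \<Rightarrow> enat \<Rightarrow> ('a \<Rightarrow> enat) set" where
  "ST_fin M Ps G \<rho> = {\<tau> \<in> ST M Ps G \<rho>. \<forall>\<omega>\<in>space M. \<tau> \<omega> \<noteq> \<infinity>}"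

definition STseq :: "'a measure \<Rightarrow> 'a measure set \<Rightarrow> (nat \<Rightarrow> nat \<Rightarrow> 'a measure) \<Rightarrow> (nat \<Rightarrow> enat) \<Rightarrow> (nat \<Rightarrow> 'a \<Rightarrow> enat) set" where
  "STseq M Ps F r = {\<tau>. \<forall>m. \<tau> m \<in> ST M Ps (F m) (r m)}"

definition STseq_fin :: "'a measure \<Rightarrow> 'a measure set \<Rightarrow> (nat \<Rightarrow> nat \<Rightarrow> 'a measure) \<Rightarrow> (nat \<Rightarrow> enat) \<Rightarrow> (nat \<Rightarrow> 'a \<Rightarrow> enat) set" where
  "STseq_fin M Ps F r = {\<tau>. \<forall>m. \<tau> m \<in> ST_fin M Ps (F m) (r m)}"

definition stopped :: "(nat \<Rightarrow> nat \<Rightarrow> 'a \<Rightarrow> ennreal) \<Rightarrow> nat \<Rightarrow> ('a \<Rightarrow> enat) \<Rightarrow> 'a \<Rightarrow> ennreal" where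
  "stopped E m \<tau> \<omega> = (case \<tau> \<omega> of enat n \<Rightarrow> E m n \<omega> | \<infinity> \<Rightarrow> limsup (\<lambda>n. E m n \<omega>))"

text \<open>E_P[X] for nonnegative X is the nonnegative integral (= \<infinity> if not integrable).\<close>
definition asym_eprocess :: "'a measure \<Rightarrow> 'a measure set \<Rightarrow> (nat \<Rightarrow> nat \<Rightarrow> 'a measure) \<Rightarrow> (nat \<Rightarrow> enat) \<Rightarrow> (nat \<Rightarrow> nat \<Rightarrow> 'a \<Rightarrow> ennreal) \<Rightarrow> bool" where
  "asym_eprocess M Ps F r E \<longleftrightarrow> adapted_seq F E \<and>
     (\<forall>\<tau>\<in>STseq M Ps F r.
        limsup (\<lambda>m. SUP P\<in>Ps. \<integral>\<^sup>+ \<omega>. stopped E m (\<tau> m) \<omega> \<partial>P) \<le> 1)"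

end

theory Submission
  imports Defs
begin

text \<open>For (iii) to (i), the majorant L stopped at \<tau> is a
  nonnegative supermartingale with finite mean; by Doob's upcrossing inequality it converges almost
  surely, so Fatou's lemma bounds the mean of E at \<tau> by that of L at time 0, also where \<tau> is
  infinite. For (ii) to (iii), L is the Snell envelope of E up to the horizon r, the increasing limit
  of the envelopes for finite horizons. The mean of such an envelope at time 0 is the value of an
  optimal stopping problem, attained by the first time the envelope meets E, a finite stopping time;
  choosing nearly optimal finite stopping times for every m turns (ii) into the bound on L at 0.\<close>

section \<open>Upcrossings\<close>

text \<open>The state after reading x 0, ..., x n: whether we are inside an upcrossing (the path
  went below a and has not yet exceeded b), and how many upcrossings have been completed.\<close>

definition upcross_step :: "real \<Rightarrow> real \<Rightarrow> bool \<times> nat \<Rightarrow> ennreal \<Rightarrow> bool \<times> nat" where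
  "upcross_step a b s v =
     (if fst s then (if ennreal b < v then (False, Suc (snd s)) else (True, snd s))
      else (v < ennreal a, snd s))"

primrec upcross :: "real \<Rightarrow> real \<Rightarrow> (nat \<Rightarrow> ennreal) \<Rightarrow> nat \<Rightarrow> bool \<times> nat" where
  "upcross a b x 0 = upcross_step a b (False, 0) (x 0)"
| "upcross a b x (Suc n) = upcross_step a b (upcross a b x n) (x (Suc n))"

text \<open>Doob's upcrossing inequality, pathwise: the strategy holding one unit exactly inside
  upcrossings gains at least b - a per completed upcrossing and, the path being nonnegative,
  loses at most a on an unfinished one.\<close>

lemma upcross_gain_real:
  fixes a b :: real and y :: "nat \<Rightarrow> real"
  assumes ab: "0 \<le> a" "a < b" and y: "\<And>k. 0 \<le> y k"
  defines "H \<equiv> \<lambda>k. fst (upcross a b (\<lambda>k. ennreal (y k)) k)"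
  shows "(b - a) * snd (upcross a b (\<lambda>k. ennreal (y k)) n)
         \<le> (\<Sum>k<n. if H k then y (Suc k) - y k else 0) + (if H n then a - y n else 0)"
proof (induction n)
  case 0
  show ?case using ab y[of 0] by (auto simp: H_def upcross_step_def ennreal_less_iff)
next
  case (Suc n)
  have "0 \<le> b" using ab by simp
  then show ?case using Suc ab y[of n] y[of "Suc n"]
    by (auto simp: H_def upcross_step_def ennreal_less_iff algebra_simps split: if_splits)
qed

lemma upcross_gain:
  fixes a b :: real and x :: "nat \<Rightarrow> ennreal"
  assumes ab: "0 \<le> a" "a < b" and fin: "\<And>k. x k < \<infinity>"
  defines "H \<equiv> \<lambda>k. fst (upcross a b x k)"
  shows "ennreal (b - a) * of_nat (snd (upcross a b x n)) + (\<Sum>k<n. if H k then x k else 0)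
       \<le> ennreal a + (\<Sum>k<n. if H k then x (Suc k) else 0)"
proof -
  define y where "y k = enn2real (x k)" for k
  have y: "0 \<le> y k" for k by (simp add: y_def)
  have x: "x = (\<lambda>k. ennreal (y k))" using fin by (auto simp: y_def fun_eq_iff)
  have "(b - a) * snd (upcross a b x n)
        \<le> (\<Sum>k<n. if H k then y (Suc k) - y k else 0) + (if H n then a - y n else 0)"
    using upcross_gain_real[OF ab, of y n] y by (simp add: H_def flip: x)
  also have "\<dots> \<le> (\<Sum>k<n. if H k then y (Suc k) else 0) - (\<Sum>k<n. if H k then y k else 0) + a"
    using y[of n] ab by (simp add: sum_subtractf[symmetric] if_distrib cong: if_cong)
  finally have real: "(b - a) * snd (upcross a b x n) + (\<Sum>k<n. if H k then y k else 0)
      \<le> a + (\<Sum>k<n. if H k then y (Suc k) else 0)"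
    by linarith
  have "ennreal (b - a) * of_nat (snd (upcross a b x n)) + (\<Sum>k<n. if H k then x k else 0)
      = ennreal ((b - a) * snd (upcross a b x n) + (\<Sum>k<n. if H k then y k else 0))"
    using ab y by (simp add: x ennreal_plus ennreal_mult sum_nonneg if_distrib[of ennreal]
        cong: if_cong flip: sum_ennreal ennreal_of_nat_eq_real_of_nat)
  also have "\<dots> \<le> ennreal (a + (\<Sum>k<n. if H k then y (Suc k) else 0))"
    using real by (rule ennreal_leI)
  also have "\<dots> = ennreal a + (\<Sum>k<n. if H k then x (Suc k) else 0)"
    using ab y by (simp add: x ennreal_plus sum_nonneg if_distrib[of ennreal] cong: if_cong
        flip: sum_ennreal)
  finally show ?thesis .
qed

lemma mono_upcross_count: "mono (\<lambda>n. snd (upcross a b x n))"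
  by (rule incseq_SucI) (simp add: upcross_step_def)

lemma upcross_inside_persists:
  assumes "fst (upcross a b x j)" "j \<le> j'"
  shows "snd (upcross a b x j) < snd (upcross a b x j')
         \<or> fst (upcross a b x j') \<and> snd (upcross a b x j') = snd (upcross a b x j)"
  using assms(2)
proof (induction j' rule: dec_induct)
  case base
  then show ?case using assms(1) by simp
next
  case (step n)
  have "snd (upcross a b x n) \<le> snd (upcross a b x (Suc n))"
    using mono_upcross_count by (rule monoD) simp
  with step.IH show ?case
    by (cases "ennreal b < x (Suc n)") (auto simp: upcross_step_def)
qed

lemma upcross_inside_if_below:
  assumes "x n < ennreal a" "a < b"
  shows "fst (upcross a b x n)"
proof -
  have "x n < ennreal b"
    using assms ennreal_leI[of a b] by (meson less_imp_le order.strict_trans2)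
  with assms(1) show ?thesis
    by (cases n) (auto simp: upcross_step_def)
qed

lemma upcross_count_increases:
  assumes below: "\<exists>\<^sub>F n in sequentially. x n < ennreal a"
    and above: "\<exists>\<^sub>F n in sequentially. ennreal b < x n"
    and "a < b"
  shows "\<exists>n'. snd (upcross a b x n) < snd (upcross a b x n')"
proof -
  obtain n1 where n1: "n \<le> n1" "x n1 < ennreal a"
    using below by (auto simp: frequently_sequentially)
  obtain n2 where n2: "n1 \<le> n2" "ennreal b < x (Suc n2)"
  proof -
    obtain m where "Suc n1 \<le> m" "ennreal b < x m"
      using above by (auto simp: frequently_sequentially)
    then show thesis using that[of "m - 1"] by (cases m) auto
  qed
  have "snd (upcross a b x n) \<le> snd (upcross a b x n1)"
    using mono_upcross_count by (rule monoD) (use n1 in simp)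
  also have "\<dots> < snd (upcross a b x (Suc n2))"
  proof -
    have "snd (upcross a b x (Suc n2))
        = (if fst (upcross a b x n2) then Suc (snd (upcross a b x n2)) else snd (upcross a b x n2))"
      using n2(2) by (simp add: upcross_step_def)
    moreover have "snd (upcross a b x n1) \<le> snd (upcross a b x n2)"
      using mono_upcross_count by (rule monoD) (use n2 in simp)
    ultimately show ?thesis
      using upcross_inside_persists[OF upcross_inside_if_below[of x n1 a b, OF n1(2) \<open>a < b\<close>] n2(1)]
      by auto
  qed
  finally show ?thesis ..
qed

lemma SUP_upcross_count_eq_top:
  assumes "liminf x < ennreal a" "ennreal b < limsup x" "a < b"
  shows "(SUP n. of_nat (snd (upcross a b x n)) :: ennreal) = \<infinity>"
proof -
  have below: "\<exists>\<^sub>F n in sequentially. x n < ennreal a"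
  proof (rule ccontr)
    assume "\<not> ?thesis"
    then have "ennreal a \<le> liminf x"
      by (intro Liminf_bounded) (simp add: not_frequently not_less)
    with assms(1) show False by simp
  qed
  have above: "\<exists>\<^sub>F n in sequentially. ennreal b < x n"
  proof (rule ccontr)
    assume "\<not> ?thesis"
    then have "limsup x \<le> ennreal b"
      by (intro Limsup_bounded) (simp add: not_frequently not_less)
    with assms(2) show False by simp
  qed
  have unbounded: "\<exists>n. K \<le> snd (upcross a b x n)" for K
  proof (induction K)
    case (Suc K)
    then obtain n where "K \<le> snd (upcross a b x n)" by blast
    moreover obtain n' where "snd (upcross a b x n) < snd (upcross a b x n')"
      using upcross_count_increases[OF below above assms(3)] by blast
    ultimately show ?case by (intro exI[of _ n']) simp
  qed simp
  show ?thesis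
  proof (unfold infinity_ennreal_def SUP_eq_top_iff, intro allI impI)
    fix y :: ennreal
    assume "y < \<top>"
    then obtain K where "y < of_nat K" using ennreal_Ex_less_of_nat by blast
    moreover obtain n where "K \<le> snd (upcross a b x n)" using unbounded by blast
    ultimately have "y < of_nat (snd (upcross a b x n))"
      by (meson of_nat_mono order.strict_trans2)
    then show "\<exists>n\<in>UNIV. y < of_nat (snd (upcross a b x n))" by blast
  qed
qed

section \<open>Nonnegative supermartingales converge\<close>

locale prob_filtration = prob_space P for P :: "'a measure" +
  fixes G :: "nat \<Rightarrow> 'a measure"
  assumes subalgebra_G: "\<And>n. subalgebra P (G n)"
    and sets_G_Suc: "\<And>n. sets (G n) \<subseteq> sets (G (Suc n))"
begin

lemma space_G: "space (G n) = space P"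
  using subalgebra_G[of n] by (simp add: subalgebra_def)

lemma sets_G_subset: "A \<in> sets (G n) \<Longrightarrow> A \<in> sets P"
  using subalgebra_G[of n] by (auto simp: subalgebra_def)

lemma sets_G_mono: "m \<le> n \<Longrightarrow> sets (G m) \<subseteq> sets (G n)"
proof (induction n rule: dec_induct)
  case (step n)
  then show ?case using sets_G_Suc[of n] by blast
qed simp

lemma measurable_G_mono: "m \<le> n \<Longrightarrow> f \<in> measurable (G m) N \<Longrightarrow> f \<in> measurable (G n) N"
  by (rule measurable_from_subalg) (auto simp: subalgebra_def space_G sets_G_mono)

lemma measurable_G_P: "f \<in> measurable (G n) N \<Longrightarrow> f \<in> measurable P N"
  by (rule measurable_from_subalg[OF subalgebra_G])

lemma sigma_finite_subalgebra_G: "sigma_finite_subalgebra P (G n)"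
proof -
  have "finite_measure_subalgebra P (G n)"
    by unfold_locales (rule subalgebra_G)
  then show ?thesis by (rule finite_measure_subalgebra_is_sigma_finite)
qed

lemma nn_integral_mult_nn_cond_exp:
  assumes "f \<in> borel_measurable (G n)" "g \<in> borel_measurable P"
  shows "(\<integral>\<^sup>+ x. f x * nn_cond_exp P (G n) g x \<partial>P) = (\<integral>\<^sup>+ x. f x * g x \<partial>P)"
  by (rule sigma_finite_subalgebra.nn_cond_exp_intg[OF sigma_finite_subalgebra_G assms])

lemma AE_nn_cond_exp_mono:
  "AE x in P. f x \<le> g x \<Longrightarrow> f \<in> borel_measurable P \<Longrightarrow> g \<in> borel_measurable P \<Longrightarrow>
   AE x in P. nn_cond_exp P (G n) f x \<le> nn_cond_exp P (G n) g x"
  by (rule sigma_finite_subalgebra.nn_cond_exp_mono[OF sigma_finite_subalgebra_G])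

lemma AE_nn_cond_exp_zero: "AE x in P. nn_cond_exp P (G n) (\<lambda>_. 0) x = 0"
proof -
  have "AE x in P. (\<lambda>_. 0::ennreal) x = nn_cond_exp P (G n) (\<lambda>_. 0) x"
    by (rule sigma_finite_subalgebra.nn_cond_exp_F_meas[OF sigma_finite_subalgebra_G]) simp
  then show ?thesis by (rule AE_mp) auto
qed

lemma AE_SUP_nn_cond_exp:
  assumes meas: "\<And>N. f N \<in> borel_measurable P" and inc: "\<And>N. AE x in P. f N x \<le> f (Suc N) x"
  shows "AE x in P. (SUP N. nn_cond_exp P (G n) (f N) x) = nn_cond_exp P (G n) (\<lambda>x. SUP N. f N x) x"
proof (rule sigma_finite_subalgebra.nn_cond_exp_charact[OF sigma_finite_subalgebra_G])
  show "(\<lambda>x. SUP N. f N x) \<in> borel_measurable P" using meas by measurable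
  show "(\<lambda>x. SUP N. nn_cond_exp P (G n) (f N) x) \<in> borel_measurable (G n)" by measurable
  fix A assume A: "A \<in> sets (G n)"
  have [measurable]: "A \<in> sets P" by (rule sets_G_subset[OF A])
  have [measurable]: "indicator A \<in> borel_measurable (G n)" using A by simp
  have "(\<integral>\<^sup>+x\<in>A. (SUP N. f N x) \<partial>P) = (\<integral>\<^sup>+x. (SUP N. f N x * indicator A x) \<partial>P)"
    by (simp add: SUP_mult_right_ennreal)
  also have "\<dots> = (SUP N. \<integral>\<^sup>+x. f N x * indicator A x \<partial>P)"
  proof (rule nn_integral_monotone_convergence_SUP_AE)
    show "AE x in P. f N x * indicator A x \<le> f (Suc N) x * indicator A x" for N
      using inc[of N] by (rule AE_mp) (auto intro!: AE_I2 mult_right_mono)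
  qed (use meas in measurable)
  also have "\<dots> = (SUP N. \<integral>\<^sup>+x. indicator A x * nn_cond_exp P (G n) (f N) x \<partial>P)"
    by (simp add: nn_integral_mult_nn_cond_exp meas mult.commute)
  also have "\<dots> = (\<integral>\<^sup>+x. (SUP N. indicator A x * nn_cond_exp P (G n) (f N) x) \<partial>P)"
  proof (rule nn_integral_monotone_convergence_SUP_AE[symmetric])
    show "AE x in P. indicator A x * nn_cond_exp P (G n) (f N) x
                   \<le> indicator A x * nn_cond_exp P (G n) (f (Suc N)) x" for N
      using AE_nn_cond_exp_mono[OF inc[of N] meas meas]
      by (rule AE_mp) (auto intro!: AE_I2 mult_left_mono)
  qed measurable
  also have "\<dots> = (\<integral>\<^sup>+x\<in>A. (SUP N. nn_cond_exp P (G n) (f N) x) \<partial>P)"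
    by (simp add: SUP_mult_left_ennreal mult.commute)
  finally show "(\<integral>\<^sup>+x\<in>A. (SUP N. f N x) \<partial>P) = (\<integral>\<^sup>+x\<in>A. (SUP N. nn_cond_exp P (G n) (f N) x) \<partial>P)" .
qed

end

locale nn_adapted_process = prob_filtration P G for P :: "'a measure" and G +
  fixes X :: "nat \<Rightarrow> 'a \<Rightarrow> ennreal"
  assumes adapted: "\<And>n. X n \<in> borel_measurable (G n)"
begin

lemma measurable_X[measurable]: "X n \<in> borel_measurable P"
  by (rule measurable_G_P[OF adapted])

lemma measurable_upcross_step:
  "(\<lambda>\<omega>. upcross_step a b s (X n \<omega>)) \<in> measurable (G n) (count_space UNIV)"
proof -
  have [measurable]: "X n \<in> borel_measurable (G n)" by (rule adapted)
  show ?thesis by (cases "fst s") (simp_all add: upcross_step_def)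
qed

lemma measurable_upcross_G:
  "(\<lambda>\<omega>. upcross a b (\<lambda>k. X k \<omega>) n) \<in> measurable (G n) (count_space UNIV)"
proof (induction n)
  case 0
  show ?case using measurable_upcross_step[of a b "(False, 0)" 0] by simp
next
  case (Suc n)
  have "(\<lambda>\<omega>. upcross a b (\<lambda>k. X k \<omega>) n) \<in> measurable (G (Suc n)) (count_space UNIV)"
    by (rule measurable_G_mono[OF _ Suc]) simp
  then show ?case
    using measurable_compose_countable[where f="\<lambda>s \<omega>. upcross_step a b s (X (Suc n) \<omega>)",
        OF measurable_upcross_step]
    by simp
qed

lemma measurable_upcross_count[measurable]:
  "(\<lambda>\<omega>. of_nat (snd (upcross a b (\<lambda>k. X k \<omega>) n)) :: ennreal) \<in> borel_measurable P"
  by (rule measurable_compose[OF measurable_G_P[OF measurable_upcross_G]]) simp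

lemma upcross_inside_sets: "{\<omega> \<in> space P. fst (upcross a b (\<lambda>k. X k \<omega>) n)} \<in> sets (G n)"
  using measurable_sets[OF measurable_upcross_G, of "{s. fst s}"] by (simp add: space_G vimage_def Int_def conj_commute)

lemma pred_upcross_inside[measurable]: "Measurable.pred P (\<lambda>\<omega>. fst (upcross a b (\<lambda>k. X k \<omega>) n))"
  using sets_G_subset[OF upcross_inside_sets] by (simp add: pred_def)

end

text \<open>The supermartingale property in integrated form, avoiding conditional expectations.\<close>

locale nn_supermartingale = nn_adapted_process P G Z for P :: "'a measure" and G Z +
  assumes supermartingale: "\<And>n A. A \<in> sets (G n) \<Longrightarrow> (\<integral>\<^sup>+x\<in>A. Z (Suc n) x \<partial>P) \<le> (\<integral>\<^sup>+x\<in>A. Z n x \<partial>P)"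
    and nn_integral_0_finite: "(\<integral>\<^sup>+x. Z 0 x \<partial>P) < \<infinity>"
begin

lemma nn_integral_le_0: "(\<integral>\<^sup>+x. Z n x \<partial>P) \<le> (\<integral>\<^sup>+x. Z 0 x \<partial>P)"
proof (induction n)
  case (Suc n)
  have "space P \<in> sets (G n)" using sets.top[of "G n"] by (simp add: space_G)
  then have "(\<integral>\<^sup>+x\<in>space P. Z (Suc n) x \<partial>P) \<le> (\<integral>\<^sup>+x\<in>space P. Z n x \<partial>P)"
    by (rule supermartingale)
  with Suc show ?case by (simp cong: nn_integral_cong)
qed simp

lemma nn_integral_finite: "(\<integral>\<^sup>+x. Z n x \<partial>P) < \<infinity>"
  using nn_integral_le_0[of n] nn_integral_0_finite by simp

lemma AE_finite: "AE \<omega> in P. \<forall>k. Z k \<omega> < \<infinity>"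
proof -
  have "AE \<omega> in P. Z k \<omega> \<noteq> \<infinity>" for k
    by (rule nn_integral_PInf_AE) (use nn_integral_finite[of k] in auto)
  then show ?thesis by (simp add: AE_all_countable less_top)
qed

lemma upcross_inequality:
  assumes ab: "0 \<le> a" "a < b"
  shows "ennreal (b - a) * (\<integral>\<^sup>+\<omega>. of_nat (snd (upcross a b (\<lambda>k. Z k \<omega>) n)) \<partial>P) \<le> ennreal a"
proof -
  let ?H = "\<lambda>k \<omega>. fst (upcross a b (\<lambda>k. Z k \<omega>) k)"
  let ?U = "\<lambda>\<omega>. of_nat (snd (upcross a b (\<lambda>k. Z k \<omega>) n)) :: ennreal"
  define before where "before k = (\<integral>\<^sup>+\<omega>. (if ?H k \<omega> then Z k \<omega> else 0) \<partial>P)" for k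
  define after where "after k = (\<integral>\<^sup>+\<omega>. (if ?H k \<omega> then Z (Suc k) \<omega> else 0) \<partial>P)" for k
  have "ennreal (b - a) * integral\<^sup>N P ?U + (\<Sum>k<n. before k)
      = (\<integral>\<^sup>+\<omega>. ennreal (b - a) * ?U \<omega> + (\<Sum>k<n. if ?H k \<omega> then Z k \<omega> else 0) \<partial>P)"
    by (simp add: before_def nn_integral_add nn_integral_cmult nn_integral_sum)
  also have "\<dots> \<le> (\<integral>\<^sup>+\<omega>. ennreal a + (\<Sum>k<n. if ?H k \<omega> then Z (Suc k) \<omega> else 0) \<partial>P)"
    by (intro nn_integral_mono_AE, rule AE_mp[OF AE_finite], intro AE_I2 impI)
      (rule upcross_gain[OF ab], simp)
  also have "\<dots> = ennreal a + (\<Sum>k<n. after k)"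
    by (simp add: after_def nn_integral_add nn_integral_sum emeasure_space_1)
  also have "\<dots> \<le> ennreal a + (\<Sum>k<n. before k)"
  proof -
    have "after k \<le> before k" for k
    proof -
      have "after k = (\<integral>\<^sup>+x\<in>{\<omega> \<in> space P. ?H k \<omega>}. Z (Suc k) x \<partial>P)"
        unfolding after_def by (rule nn_integral_cong) (simp add: indicator_def)
      also have "\<dots> \<le> (\<integral>\<^sup>+x\<in>{\<omega> \<in> space P. ?H k \<omega>}. Z k x \<partial>P)"
        by (rule supermartingale[OF upcross_inside_sets])
      also have "\<dots> = before k"
        unfolding before_def by (rule nn_integral_cong) (simp add: indicator_def)
      finally show ?thesis .
    qed
    then show ?thesis by (intro add_left_mono sum_mono)
  qed
  finally have le: "ennreal (b - a) * integral\<^sup>N P ?U + (\<Sum>k<n. before k) \<le> ennreal a + (\<Sum>k<n. before k)" .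
  have "before k < \<infinity>" for k
  proof -
    have "before k \<le> (\<integral>\<^sup>+\<omega>. Z k \<omega> \<partial>P)"
      unfolding before_def by (rule nn_integral_mono) simp
    then show ?thesis using nn_integral_finite[of k] by simp
  qed
  then have "(\<Sum>k<n. before k) \<noteq> \<infinity>" by (simp add: less_top[symmetric])
  with le show ?thesis by (simp add: add.commute[of _ "\<Sum>k<n. before k"] ennreal_add_left_cancel_le)
qed

lemma AE_upcross_count_finite:
  assumes ab: "0 \<le> a" "a < b"
  shows "AE \<omega> in P. (SUP n. of_nat (snd (upcross a b (\<lambda>k. Z k \<omega>) n)) :: ennreal) \<noteq> \<infinity>"
proof (rule nn_integral_PInf_AE)
  let ?U = "\<lambda>n \<omega>. of_nat (snd (upcross a b (\<lambda>k. Z k \<omega>) n)) :: ennreal"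
  show "(\<lambda>\<omega>. SUP n. ?U n \<omega>) \<in> borel_measurable P" by measurable
  have "incseq ?U"
    using mono_upcross_count by (auto simp: incseq_def le_fun_def monoD)
  then have "(\<integral>\<^sup>+\<omega>. (SUP n. ?U n \<omega>) \<partial>P) = (SUP n. \<integral>\<^sup>+\<omega>. ?U n \<omega> \<partial>P)"
    by (rule nn_integral_monotone_convergence_SUP) simp
  moreover have "ennreal (b - a) * (SUP n. \<integral>\<^sup>+\<omega>. ?U n \<omega> \<partial>P) \<le> ennreal a"
    unfolding SUP_mult_left_ennreal using upcross_inequality[OF ab] by (rule SUP_least)
  ultimately have bound: "ennreal (b - a) * (\<integral>\<^sup>+\<omega>. (SUP n. ?U n \<omega>) \<partial>P) \<le> ennreal a"
    by simp
  show "(\<integral>\<^sup>+\<omega>. (SUP n. ?U n \<omega>) \<partial>P) \<noteq> \<infinity>"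
  proof
    assume "(\<integral>\<^sup>+\<omega>. (SUP n. ?U n \<omega>) \<partial>P) = \<infinity>"
    with bound ab show False by (simp add: ennreal_mult_top top_unique)
  qed
qed

lemma AE_liminf_eq_limsup: "AE \<omega> in P. liminf (\<lambda>n. Z n \<omega>) = limsup (\<lambda>n. Z n \<omega>)"
proof -
  let ?U = "\<lambda>q \<omega>. SUP n. of_nat (snd (upcross (of_rat (fst q)) (of_rat (snd q)) (\<lambda>k. Z k \<omega>) n)) :: ennreal"
  have "AE \<omega> in P. \<forall>q. 0 \<le> fst q \<and> fst q < snd q \<longrightarrow> ?U q \<omega> \<noteq> \<infinity>"
    unfolding AE_all_countable
  proof
    fix q :: "rat \<times> rat"
    show "AE \<omega> in P. 0 \<le> fst q \<and> fst q < snd q \<longrightarrow> ?U q \<omega> \<noteq> \<infinity>"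
    proof (cases "0 \<le> fst q \<and> fst q < snd q")
      case True
      then have "0 \<le> (of_rat (fst q) :: real)" "(of_rat (fst q) :: real) < of_rat (snd q)"
        by (simp_all add: of_rat_less)
      from AE_upcross_count_finite[OF this] show ?thesis
        by (rule AE_mp) (intro AE_I2 impI, assumption)
    qed (intro AE_I2, blast)
  qed
  then show ?thesis
  proof (rule AE_mp, intro AE_I2 impI)
    fix \<omega>
    assume finite: "\<forall>q. 0 \<le> fst q \<and> fst q < snd q \<longrightarrow> ?U q \<omega> \<noteq> \<infinity>"
    let ?x = "\<lambda>n. Z n \<omega>"
    show "liminf ?x = limsup ?x"
    proof (rule ccontr)
      assume "liminf ?x \<noteq> limsup ?x"
      with Liminf_le_Limsup[of sequentially ?x] have "liminf ?x < limsup ?x" by simp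
      then obtain q1 :: rat where q1: "liminf ?x < of_rat q1" "ennreal (of_rat q1) < limsup ?x"
        by (blast dest: ennreal_rat_dense)
      then obtain q2 :: rat where q2: "ennreal (of_rat q1) < of_rat q2" "ennreal (of_rat q2) < limsup ?x"
        by (blast dest: ennreal_rat_dense)
      have pos: "0 < (of_rat q1 :: real)"
        using le_less_trans[OF zero_le q1(1)] by simp
      with q2(1) have less: "(of_rat q1 :: real) < of_rat q2"
        by (simp add: ennreal_less_iff)
      with pos have "?U (q1, q2) \<omega> \<noteq> \<infinity>"
        using finite[rule_format, of "(q1, q2)"] by (simp add: of_rat_less del: SUP_eq_top_iff)
      moreover have "?U (q1, q2) \<omega> = \<infinity>"
        using q1(1) q2(2) less by (intro SUP_upcross_count_eq_top) simp_all
      ultimately show False by contradiction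
    qed
  qed
qed

lemma nn_integral_limsup_le: "(\<integral>\<^sup>+\<omega>. limsup (\<lambda>n. Z n \<omega>) \<partial>P) \<le> (\<integral>\<^sup>+\<omega>. Z 0 \<omega> \<partial>P)"
proof -
  have "(\<integral>\<^sup>+\<omega>. limsup (\<lambda>n. Z n \<omega>) \<partial>P) = (\<integral>\<^sup>+\<omega>. liminf (\<lambda>n. Z n \<omega>) \<partial>P)"
    by (rule nn_integral_cong_AE) (use AE_liminf_eq_limsup in \<open>auto elim: eventually_mono\<close>)
  also have "\<dots> \<le> liminf (\<lambda>n. \<integral>\<^sup>+\<omega>. Z n \<omega> \<partial>P)"
    by (rule nn_integral_liminf) simp
  also have "\<dots> \<le> (\<integral>\<^sup>+\<omega>. Z 0 \<omega> \<partial>P)"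
    by (intro Liminf_le) (auto intro!: always_eventually nn_integral_le_0)
  finally show ?thesis .
qed

end

section \<open>Optional stopping\<close>

definition stopped_process :: "(nat \<Rightarrow> 'a \<Rightarrow> ennreal) \<Rightarrow> ('a \<Rightarrow> enat) \<Rightarrow> nat \<Rightarrow> 'a \<Rightarrow> ennreal" where
  "stopped_process L \<tau> n \<omega> = L (the_enat (min (\<tau> \<omega>) (enat n))) \<omega>"

lemma stopped_process_0: "stopped_process L \<tau> 0 = L 0"
proof
  show "stopped_process L \<tau> 0 \<omega> = L 0 \<omega>" for \<omega>
    by (cases "\<tau> \<omega>") (simp_all add: stopped_process_def zero_enat_def)
qed

lemma stopped_process_Suc:
  "stopped_process L \<tau> (Suc n) \<omega> = (if \<tau> \<omega> \<le> enat n then stopped_process L \<tau> n \<omega> else L (Suc n) \<omega>)"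
  by (cases "\<tau> \<omega>") (auto simp: stopped_process_def min_def le_Suc_eq)

lemma stopped_process_not_stopped: "\<not> \<tau> \<omega> \<le> enat n \<Longrightarrow> stopped_process L \<tau> n \<omega> = L n \<omega>"
  by (simp add: stopped_process_def min_def)

lemma stopped_process_stopped: "\<tau> \<omega> = enat j \<Longrightarrow> j \<le> n \<Longrightarrow> stopped_process L \<tau> n \<omega> = L j \<omega>"
  by (simp add: stopped_process_def)

context prob_filtration
begin

lemma measurable_stopped_process_G:
  assumes adapted: "\<And>n. L n \<in> borel_measurable (G n)"
    and stopping_time: "\<And>n. {\<omega> \<in> space P. \<tau> \<omega> \<le> enat n} \<in> sets (G n)"
  shows "stopped_process L \<tau> n \<in> borel_measurable (G n)"
proof (induction n)
  case 0
  then show ?case by (simp add: stopped_process_0 adapted)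
next
  case (Suc n)
  have [measurable]: "stopped_process L \<tau> n \<in> borel_measurable (G (Suc n))"
    by (rule measurable_G_mono[OF _ Suc]) simp
  have [measurable]: "L (Suc n) \<in> borel_measurable (G (Suc n))" by (rule adapted)
  have [measurable]: "Measurable.pred (G (Suc n)) (\<lambda>\<omega>. \<tau> \<omega> \<le> enat n)"
    using stopping_time[of n] sets_G_Suc[of n] unfolding pred_def space_G by auto
  show ?case unfolding stopped_process_Suc[abs_def] by measurable
qed

text \<open>The supermartingale inequality of L is only needed before the horizon r, which the
  stopped process never passes.\<close>

lemma set_nn_integral_stopped_process_Suc_le:
  fixes L :: "nat \<Rightarrow> 'a \<Rightarrow> ennreal" and \<tau> :: "'a \<Rightarrow> enat" and r :: enat
  assumes adapted: "\<And>n. L n \<in> borel_measurable (G n)"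
    and stopping_time: "\<And>n. {\<omega> \<in> space P. \<tau> \<omega> \<le> enat n} \<in> sets (G n)"
    and bounded: "AE \<omega> in P. \<tau> \<omega> \<le> r"
    and super: "\<And>n. enat (n + 1) \<le> r \<Longrightarrow> AE \<omega> in P. nn_cond_exp P (G n) (L (n + 1)) \<omega> \<le> L n \<omega>"
    and A: "A \<in> sets (G n)"
  shows "(\<integral>\<^sup>+x\<in>A. stopped_process L \<tau> (Suc n) x \<partial>P) \<le> (\<integral>\<^sup>+x\<in>A. stopped_process L \<tau> n x \<partial>P)"
proof -
  let ?Z = "stopped_process L \<tau>"
  have [measurable]: "L k \<in> borel_measurable P" "?Z k \<in> borel_measurable P" for k
    using measurable_stopped_process_G[OF adapted stopping_time] adapted by (auto intro: measurable_G_P)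
  define B where "B = A \<inter> (space P - {\<omega> \<in> space P. \<tau> \<omega> \<le> enat n})"
  have B: "B \<in> sets (G n)"
    unfolding B_def using A sets.compl_sets[OF stopping_time[of n]] by (simp add: space_G)
  have [measurable]: "A \<in> sets P" "B \<in> sets P" using A B by (simp_all add: sets_G_subset)
  have L_step: "(\<integral>\<^sup>+x. L (Suc n) x * indicator B x \<partial>P) \<le> (\<integral>\<^sup>+x. L n x * indicator B x \<partial>P)"
  proof (cases "enat (n + 1) \<le> r")
    case True
    have [measurable]: "indicator B \<in> borel_measurable (G n)" using B by simp
    have "(\<integral>\<^sup>+x. L (Suc n) x * indicator B x \<partial>P)
        = (\<integral>\<^sup>+x. indicator B x * nn_cond_exp P (G n) (L (n + 1)) x \<partial>P)"
      by (simp add: nn_integral_mult_nn_cond_exp mult.commute)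
    also have "\<dots> \<le> (\<integral>\<^sup>+x. L n x * indicator B x \<partial>P)"
      using super[OF True] by (intro nn_integral_mono_AE) (auto elim!: eventually_mono simp: indicator_def)
    finally show ?thesis .
  next
    case False
    have "AE x in P. L (Suc n) x * indicator B x = 0"
      using bounded
    proof (rule eventually_mono)
      fix x assume "\<tau> x \<le> r"
      with False have "\<tau> x \<le> enat n" by (cases r; cases "\<tau> x") auto
      then show "L (Suc n) x * indicator B x = 0" by (simp add: B_def indicator_def)
    qed
    then show ?thesis by (simp add: nn_integral_0_iff_AE[THEN iffD2])
  qed
  have "?Z (Suc n) x * indicator A x = ?Z n x * indicator (A - B) x + L (Suc n) x * indicator B x"
    "?Z n x * indicator A x = ?Z n x * indicator (A - B) x + L n x * indicator B x"
    if "x \<in> space P" for x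
    using that by (auto simp: stopped_process_Suc stopped_process_not_stopped B_def indicator_def)
  then have "(\<integral>\<^sup>+x\<in>A. ?Z (Suc n) x \<partial>P)
      = (\<integral>\<^sup>+x. ?Z n x * indicator (A - B) x \<partial>P) + (\<integral>\<^sup>+x. L (Suc n) x * indicator B x \<partial>P)"
    "(\<integral>\<^sup>+x\<in>A. ?Z n x \<partial>P)
      = (\<integral>\<^sup>+x. ?Z n x * indicator (A - B) x \<partial>P) + (\<integral>\<^sup>+x. L n x * indicator B x \<partial>P)"
    by (auto simp flip: nn_integral_add intro!: nn_integral_cong)
  with L_step show ?thesis by (simp add: add_left_mono)
qed

lemma nn_supermartingale_stopped_process:
  fixes L :: "nat \<Rightarrow> 'a \<Rightarrow> ennreal" and \<tau> :: "'a \<Rightarrow> enat" and r :: enat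
  assumes adapted: "\<And>n. L n \<in> borel_measurable (G n)"
    and stopping_time: "\<And>n. {\<omega> \<in> space P. \<tau> \<omega> \<le> enat n} \<in> sets (G n)"
    and bounded: "AE \<omega> in P. \<tau> \<omega> \<le> r"
    and finite: "(\<integral>\<^sup>+\<omega>. L 0 \<omega> \<partial>P) < \<infinity>"
    and super: "\<And>n. enat (n + 1) \<le> r \<Longrightarrow> AE \<omega> in P. nn_cond_exp P (G n) (L (n + 1)) \<omega> \<le> L n \<omega>"
  shows "nn_supermartingale P G (stopped_process L \<tau>)"
  using finite measurable_stopped_process_G[OF adapted stopping_time]
    set_nn_integral_stopped_process_Suc_le[OF adapted stopping_time bounded super]
  by unfold_locales (simp_all add: stopped_process_0 subalgebra_G sets_G_Suc)

text \<open>The stopped majorant converges almost surely, so Fatou's lemma applies also where the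
  stopping time is infinite.\<close>

lemma nn_integral_stopped_le:
  fixes X L :: "nat \<Rightarrow> 'a \<Rightarrow> ennreal" and \<tau> :: "'a \<Rightarrow> enat" and r :: enat
  assumes adapted: "\<And>n. L n \<in> borel_measurable (G n)"
    and majorant: "\<And>n. AE \<omega> in P. X n \<omega> \<le> L n \<omega>"
    and stopping_time: "\<And>n. {\<omega> \<in> space P. \<tau> \<omega> \<le> enat n} \<in> sets (G n)"
    and bounded: "AE \<omega> in P. \<tau> \<omega> \<le> r"
    and finite: "(\<integral>\<^sup>+\<omega>. L 0 \<omega> \<partial>P) < \<infinity>"
    and super: "\<And>n. enat (n + 1) \<le> r \<Longrightarrow> AE \<omega> in P. nn_cond_exp P (G n) (L (n + 1)) \<omega> \<le> L n \<omega>"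
  shows "(\<integral>\<^sup>+\<omega>. (case \<tau> \<omega> of enat n \<Rightarrow> X n \<omega> | \<infinity> \<Rightarrow> limsup (\<lambda>n. X n \<omega>)) \<partial>P)
         \<le> (\<integral>\<^sup>+\<omega>. L 0 \<omega> \<partial>P)"
proof -
  interpret Z: nn_supermartingale P G "stopped_process L \<tau>"
    by (rule nn_supermartingale_stopped_process[OF adapted stopping_time bounded finite super])
  have "AE \<omega> in P. \<forall>n. X n \<omega> \<le> L n \<omega>" using majorant by (simp add: AE_all_countable)
  then have "AE \<omega> in P. (case \<tau> \<omega> of enat n \<Rightarrow> X n \<omega> | \<infinity> \<Rightarrow> limsup (\<lambda>n. X n \<omega>))
      \<le> limsup (\<lambda>n. stopped_process L \<tau> n \<omega>)"
  proof (rule eventually_mono)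
    fix \<omega> assume le: "\<forall>n. X n \<omega> \<le> L n \<omega>"
    show "(case \<tau> \<omega> of enat n \<Rightarrow> X n \<omega> | \<infinity> \<Rightarrow> limsup (\<lambda>n. X n \<omega>))
        \<le> limsup (\<lambda>n. stopped_process L \<tau> n \<omega>)"
    proof (cases "\<tau> \<omega>")
      case (enat j)
      then have "limsup (\<lambda>n. stopped_process L \<tau> n \<omega>) = limsup (\<lambda>n. L j \<omega>)"
        by (intro Limsup_eq eventually_sequentiallyI[of j]) (simp add: stopped_process_stopped)
      with enat le show ?thesis by (simp add: Limsup_const)
    next
      case infinity
      then show ?thesis
        using le by (auto simp: stopped_process_not_stopped intro: Limsup_mono)
    qed
  qed
  then have "(\<integral>\<^sup>+\<omega>. (case \<tau> \<omega> of enat n \<Rightarrow> X n \<omega> | \<infinity> \<Rightarrow> limsup (\<lambda>n. X n \<omega>)) \<partial>P)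
      \<le> (\<integral>\<^sup>+\<omega>. limsup (\<lambda>n. stopped_process L \<tau> n \<omega>) \<partial>P)"
    by (rule nn_integral_mono_AE)
  also have "\<dots> \<le> (\<integral>\<^sup>+\<omega>. L 0 \<omega> \<partial>P)"
    using Z.nn_integral_limsup_le by (simp add: stopped_process_0)
  finally show ?thesis .
qed

end

section \<open>The Snell envelope\<close>

text \<open>Backward induction for the Snell envelope with finite horizon N: entry k is its value at
  time N - k.\<close>

primrec snell_back :: "'a measure \<Rightarrow> (nat \<Rightarrow> 'a measure) \<Rightarrow> (nat \<Rightarrow> 'a \<Rightarrow> ennreal) \<Rightarrow> nat \<Rightarrow> nat \<Rightarrow> 'a \<Rightarrow> ennreal"
where
  "snell_back P G X N 0 = X N"
| "snell_back P G X N (Suc k) =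
     (\<lambda>\<omega>. max (X (N - Suc k) \<omega>) (nn_cond_exp P (G (N - Suc k)) (snell_back P G X N k) \<omega>))"

definition snell :: "'a measure \<Rightarrow> (nat \<Rightarrow> 'a measure) \<Rightarrow> (nat \<Rightarrow> 'a \<Rightarrow> ennreal) \<Rightarrow> nat \<Rightarrow> nat \<Rightarrow> 'a \<Rightarrow> ennreal"
where "snell P G X N n = (if n \<le> N then snell_back P G X N (N - n) else (\<lambda>_. 0))"

definition horizon_cap :: "enat \<Rightarrow> nat \<Rightarrow> nat" where
  "horizon_cap r N = (if enat N \<le> r then N else the_enat r)"

text \<open>The Snell envelope for a possibly infinite horizon r, as the increasing limit of the
  envelopes for the finite horizons min N r.\<close>

definition snell_lim :: "'a measure \<Rightarrow> (nat \<Rightarrow> 'a measure) \<Rightarrow> (nat \<Rightarrow> 'a \<Rightarrow> ennreal) \<Rightarrow> enat \<Rightarrow> nat \<Rightarrow> 'a \<Rightarrow> ennreal"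
where "snell_lim P G X r n = (\<lambda>\<omega>. SUP N. snell P G X (horizon_cap r N) n \<omega>)"

definition stop_now :: "'a measure \<Rightarrow> (nat \<Rightarrow> 'a measure) \<Rightarrow> (nat \<Rightarrow> 'a \<Rightarrow> ennreal) \<Rightarrow> nat \<Rightarrow> nat \<Rightarrow> 'a \<Rightarrow> bool"
where "stop_now P G X h k \<omega> \<longleftrightarrow> h \<le> k \<or> nn_cond_exp P (G k) (snell P G X h (Suc k)) \<omega> \<le> X k \<omega>"

definition snell_stop :: "'a measure \<Rightarrow> (nat \<Rightarrow> 'a measure) \<Rightarrow> (nat \<Rightarrow> 'a \<Rightarrow> ennreal) \<Rightarrow> nat \<Rightarrow> 'a \<Rightarrow> nat"
where "snell_stop P G X h \<omega> = (LEAST k. stop_now P G X h k \<omega>)"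

lemma horizon_cap_le: "enat (horizon_cap r N) \<le> r"
  by (cases r) (auto simp: horizon_cap_def)

lemma horizon_cap_eq: "enat N \<le> r \<Longrightarrow> horizon_cap r N = N"
  by (simp add: horizon_cap_def)

lemma horizon_cap_Suc: "horizon_cap r (Suc N) = horizon_cap r N \<or> horizon_cap r (Suc N) = Suc (horizon_cap r N)"
  by (cases r) (auto simp: horizon_cap_def)

lemma snell_horizon: "snell P G X N N = X N"
  by (simp add: snell_def)

lemma snell_after_horizon: "N < n \<Longrightarrow> snell P G X N n = (\<lambda>_. 0)"
  by (simp add: snell_def)

lemma snell_before_horizon:
  "n < N \<Longrightarrow> snell P G X N n = (\<lambda>\<omega>. max (X n \<omega>) (nn_cond_exp P (G n) (snell P G X N (Suc n)) \<omega>))"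
  by (simp add: snell_def Suc_diff_Suc[symmetric])

context nn_adapted_process
begin

lemma measurable_snell_G: "snell P G X N n \<in> borel_measurable (G n)"
proof (cases "n < N")
  case True
  have [measurable]: "X n \<in> borel_measurable (G n)" by (rule adapted)
  show ?thesis unfolding snell_before_horizon[OF True] by measurable
next
  case False
  then show ?thesis by (cases "n = N") (simp_all add: snell_horizon snell_after_horizon adapted)
qed

lemma measurable_snell[measurable]: "snell P G X N n \<in> borel_measurable P"
  by (rule measurable_G_P[OF measurable_snell_G])

lemma AE_snell_mono_horizon: "AE x in P. snell P G X N n x \<le> snell P G X (Suc N) n x"
proof (cases "n \<le> N")
  case True
  have "AE x in P. snell P G X N (N - d) x \<le> snell P G X (Suc N) (N - d) x" if "d \<le> N" for d
    using that
  proof (induction d)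
    case 0
    show ?case by (simp add: snell_horizon snell_before_horizon)
  next
    case (Suc d)
    have lt: "N - Suc d < N" "N - Suc d < Suc N" and sc: "Suc (N - Suc d) = N - d"
      using Suc.prems by simp_all
    have "AE x in P. nn_cond_exp P (G (N - Suc d)) (snell P G X N (N - d)) x
        \<le> nn_cond_exp P (G (N - Suc d)) (snell P G X (Suc N) (N - d)) x"
      using Suc by (intro AE_nn_cond_exp_mono) auto
    then show ?case
      unfolding snell_before_horizon[OF lt(1)] snell_before_horizon[OF lt(2)] sc
      by (rule eventually_mono) (auto simp: le_max_iff_disj)
  qed
  from this[of "N - n"] True show ?thesis by simp
qed (simp add: snell_after_horizon)

lemma AE_snell_mono_horizon_cap: "AE x in P. snell P G X (horizon_cap r N) n x \<le> snell P G X (horizon_cap r (Suc N)) n x"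
  using horizon_cap_Suc[of r N] AE_snell_mono_horizon[of "horizon_cap r N" n] by auto

lemma measurable_snell_lim_G: "snell_lim P G X r n \<in> borel_measurable (G n)"
  unfolding snell_lim_def using measurable_snell_G by measurable

lemma snell_lim_ge: "enat n \<le> r \<Longrightarrow> X n \<omega> \<le> snell_lim P G X r n \<omega>"
  unfolding snell_lim_def by (rule SUP_upper2[of n]) (simp_all add: horizon_cap_eq snell_horizon)

lemma AE_snell_lim_supermartingale:
  assumes "enat (n + 1) \<le> r"
  shows "AE x in P. nn_cond_exp P (G n) (snell_lim P G X r (n + 1)) x \<le> snell_lim P G X r n x"
proof -
  let ?S = "\<lambda>N. snell P G X (horizon_cap r N)"
  have "AE x in P. nn_cond_exp P (G n) (?S N (n + 1)) x \<le> ?S N n x" for N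
  proof (cases "n < horizon_cap r N")
    case True
    then show ?thesis unfolding snell_before_horizon[OF True] by simp
  next
    case False
    then show ?thesis using AE_nn_cond_exp_zero[of n] by (simp add: snell_after_horizon eventually_mono)
  qed
  then have "AE x in P. \<forall>N. nn_cond_exp P (G n) (?S N (n + 1)) x \<le> ?S N n x"
    by (simp add: AE_all_countable)
  moreover have "AE x in P. (SUP N. nn_cond_exp P (G n) (?S N (n + 1)) x)
      = nn_cond_exp P (G n) (\<lambda>x. SUP N. ?S N (n + 1) x) x"
    by (rule AE_SUP_nn_cond_exp) (simp_all add: AE_snell_mono_horizon_cap)
  ultimately show ?thesis
  proof eventually_elim
    case (elim x)
    have "nn_cond_exp P (G n) (snell_lim P G X r (n + 1)) x = (SUP N. nn_cond_exp P (G n) (?S N (n + 1)) x)"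
      using elim(2) by (simp add: snell_lim_def)
    also have "\<dots> \<le> (SUP N. ?S N n x)"
      using elim(1) by (intro SUP_mono) blast
    finally show ?case by (simp add: snell_lim_def)
  qed
qed

lemma nn_integral_snell_lim_0:
  "(\<integral>\<^sup>+x. snell_lim P G X r 0 x \<partial>P) = (SUP N. \<integral>\<^sup>+x. snell P G X (horizon_cap r N) 0 x \<partial>P)"
  unfolding snell_lim_def
  by (rule nn_integral_monotone_convergence_SUP_AE) (simp_all add: AE_snell_mono_horizon_cap)

lemma nn_integral_snell_lim_le_0:
  "enat n \<le> r \<Longrightarrow> (\<integral>\<^sup>+x. snell_lim P G X r n x \<partial>P) \<le> (\<integral>\<^sup>+x. snell_lim P G X r 0 x \<partial>P)"
proof (induction n)
  case (Suc n)
  have "(\<integral>\<^sup>+x. snell_lim P G X r (Suc n) x \<partial>P)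
      = (\<integral>\<^sup>+x. 1 * nn_cond_exp P (G n) (snell_lim P G X r (n + 1)) x \<partial>P)"
    using nn_integral_mult_nn_cond_exp[of "\<lambda>_. 1" n "snell_lim P G X r (n + 1)"]
      measurable_G_P[OF measurable_snell_lim_G] by simp
  also have "\<dots> \<le> (\<integral>\<^sup>+x. snell_lim P G X r n x \<partial>P)"
    using AE_snell_lim_supermartingale[of n r] Suc.prems by (intro nn_integral_mono_AE) simp_all
  also have "\<dots> \<le> (\<integral>\<^sup>+x. snell_lim P G X r 0 x \<partial>P)"
    using Suc by (simp add: order_trans[OF _ Suc.prems])
  finally show ?case .
qed simp

lemma pred_stop_now_G: "Measurable.pred (G k) (stop_now P G X h k)"
proof -
  have [measurable]: "X k \<in> borel_measurable (G k)" by (rule adapted)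
  show ?thesis unfolding stop_now_def[abs_def] by measurable
qed

lemma pred_stop_now[measurable]: "Measurable.pred P (stop_now P G X h k)"
  by (rule measurable_G_P[OF pred_stop_now_G])

lemma measurable_snell_stop[measurable]: "snell_stop P G X h \<in> measurable P (count_space UNIV)"
  unfolding snell_stop_def[abs_def] by (rule measurable_Least) (rule pred_stop_now)

lemma snell_stop_le: "snell_stop P G X h \<omega> \<le> h"
  unfolding snell_stop_def by (rule Least_le) (simp add: stop_now_def)

lemma stop_now_snell_stop: "stop_now P G X h (snell_stop P G X h \<omega>) \<omega>"
  unfolding snell_stop_def by (rule LeastI[of _ h]) (simp add: stop_now_def)

lemma not_stop_now_before_snell_stop: "k < snell_stop P G X h \<omega> \<Longrightarrow> \<not> stop_now P G X h k \<omega>"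
  unfolding snell_stop_def by (rule not_less_Least)

lemma snell_stop_le_iff: "snell_stop P G X h \<omega> \<le> n \<longleftrightarrow> (\<exists>k\<le>n. stop_now P G X h k \<omega>)"
  using stop_now_snell_stop not_stop_now_before_snell_stop by (meson leI order_trans)

lemma snell_stop_stopping_time: "{\<omega> \<in> space P. enat (snell_stop P G X h \<omega>) \<le> enat n} \<in> sets (G n)"
proof -
  have "{\<omega> \<in> space P. enat (snell_stop P G X h \<omega>) \<le> enat n}
      = (\<Union>k\<le>n. {\<omega> \<in> space (G k). stop_now P G X h k \<omega>})"
    by (auto simp: snell_stop_le_iff space_G)
  also have "\<dots> \<in> sets (G n)"
  proof (intro sets.finite_UN)
    show "{\<omega> \<in> space (G k). stop_now P G X h k \<omega>} \<in> sets (G n)" if "k \<in> {..n}" for k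
      using pred_stop_now_G[where k=k and h=h] sets_G_mono[of k n] that by (auto simp: pred_def)
  qed simp
  finally show ?thesis .
qed

lemma snell_at_snell_stop:
  "snell P G X h (snell_stop P G X h \<omega>) \<omega> = X (snell_stop P G X h \<omega>) \<omega>"
  using stop_now_snell_stop[of h \<omega>] snell_stop_le[of h \<omega>]
  by (cases "snell_stop P G X h \<omega> < h") (auto simp: stop_now_def snell_before_horizon snell_horizon)

lemma snell_before_snell_stop:
  "k < snell_stop P G X h \<omega> \<Longrightarrow> snell P G X h k \<omega> = nn_cond_exp P (G k) (snell P G X h (Suc k)) \<omega>"
  using not_stop_now_before_snell_stop[of k h \<omega>]
  by (auto simp: stop_now_def snell_before_horizon)

lemma nn_integral_stopped_snell_Suc:
  assumes "k < h"
  defines "S \<equiv> stopped_process (snell P G X h) (\<lambda>\<omega>. enat (snell_stop P G X h \<omega>))"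
  shows "(\<integral>\<^sup>+\<omega>. S (Suc k) \<omega> \<partial>P) = (\<integral>\<^sup>+\<omega>. S k \<omega> \<partial>P)"
proof -
  define D where "D = space P - {\<omega> \<in> space P. enat (snell_stop P G X h \<omega>) \<le> enat k}"
  have D: "D \<in> sets (G k)"
    unfolding D_def using sets.compl_sets[OF snell_stop_stopping_time] by (simp add: space_G)
  have [measurable]: "D \<in> sets P" "indicator D \<in> borel_measurable (G k)"
    using D by (simp_all add: sets_G_subset)
  have S_measurable[measurable]: "S n \<in> borel_measurable P" for n
  proof -
    show ?thesis unfolding S_def stopped_process_def[abs_def]
      by (rule measurable_compose_countable[where f="\<lambda>i \<omega>. snell P G X h i \<omega>"]) simp_all
  qed
  let ?C = "nn_cond_exp P (G k) (snell P G X h (Suc k))"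
  have "S (Suc k) \<omega> = S k \<omega> * indicator (space P - D) \<omega> + snell P G X h (Suc k) \<omega> * indicator D \<omega>"
    "S k \<omega> = S k \<omega> * indicator (space P - D) \<omega> + ?C \<omega> * indicator D \<omega>"
    if "\<omega> \<in> space P" for \<omega>
    using that by (auto simp: S_def D_def stopped_process_Suc stopped_process_not_stopped
        snell_before_snell_stop indicator_def)
  then have "(\<integral>\<^sup>+\<omega>. S (Suc k) \<omega> \<partial>P)
      = (\<integral>\<^sup>+\<omega>. S k \<omega> * indicator (space P - D) \<omega> \<partial>P) + (\<integral>\<^sup>+\<omega>. snell P G X h (Suc k) \<omega> * indicator D \<omega> \<partial>P)"
    "(\<integral>\<^sup>+\<omega>. S k \<omega> \<partial>P)
      = (\<integral>\<^sup>+\<omega>. S k \<omega> * indicator (space P - D) \<omega> \<partial>P) + (\<integral>\<^sup>+\<omega>. ?C \<omega> * indicator D \<omega> \<partial>P)"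
    by (auto simp flip: nn_integral_add intro!: nn_integral_cong)
  moreover have "(\<integral>\<^sup>+\<omega>. ?C \<omega> * indicator D \<omega> \<partial>P) = (\<integral>\<^sup>+\<omega>. snell P G X h (Suc k) \<omega> * indicator D \<omega> \<partial>P)"
    using nn_integral_mult_nn_cond_exp[of "indicator D" k "snell P G X h (Suc k)"]
    by (simp add: mult.commute)
  ultimately show ?thesis by simp
qed

lemma nn_integral_snell_eq_stopped:
  "(\<integral>\<^sup>+\<omega>. snell P G X h 0 \<omega> \<partial>P) = (\<integral>\<^sup>+\<omega>. X (snell_stop P G X h \<omega>) \<omega> \<partial>P)"
proof -
  let ?S = "stopped_process (snell P G X h) (\<lambda>\<omega>. enat (snell_stop P G X h \<omega>))"
  have "k \<le> h \<Longrightarrow> (\<integral>\<^sup>+\<omega>. ?S k \<omega> \<partial>P) = (\<integral>\<^sup>+\<omega>. ?S 0 \<omega> \<partial>P)" for k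
    by (induction k) (simp_all add: nn_integral_stopped_snell_Suc)
  then have "(\<integral>\<^sup>+\<omega>. snell P G X h 0 \<omega> \<partial>P) = (\<integral>\<^sup>+\<omega>. ?S h \<omega> \<partial>P)"
    by (simp add: stopped_process_0)
  also have "\<dots> = (\<integral>\<^sup>+\<omega>. X (snell_stop P G X h \<omega>) \<omega> \<partial>P)"
    using snell_stop_le by (simp add: stopped_process_stopped snell_at_snell_stop)
  finally show ?thesis .
qed

end

section \<open>Asymptotic e-processes\<close>

lemma limsup_SUP_le_if_choices:
  fixes f :: "nat \<Rightarrow> 'b \<Rightarrow> 'c::{complete_linorder, dense_linorder}"
  assumes nonempty: "\<And>m. S m \<noteq> {}"
    and choices: "\<And>t. (\<And>m. t m \<in> S m) \<Longrightarrow> limsup (\<lambda>m. f m (t m)) \<le> c"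
  shows "limsup (\<lambda>m. SUP s\<in>S m. f m s) \<le> c"
  unfolding Limsup_le_iff
proof (intro allI impI)
  fix y assume "c < y"
  then obtain c' where c': "c < c'" "c' < y" using dense by blast
  have "\<exists>s. s \<in> S m \<and> (c' < (SUP s\<in>S m. f m s) \<longrightarrow> c' < f m s)" for m
    using nonempty[of m] by (cases "c' < (SUP s\<in>S m. f m s)") (auto simp: less_SUP_iff)
  then obtain t where t: "\<And>m. t m \<in> S m" and big: "\<And>m. c' < (SUP s\<in>S m. f m s) \<Longrightarrow> c' < f m (t m)"
    by metis
  have "limsup (\<lambda>m. f m (t m)) \<le> c" by (rule choices) (rule t)
  with c'(1) have "\<forall>\<^sub>F m in sequentially. f m (t m) < c'" by (simp add: Limsup_le_iff)
  then show "\<forall>\<^sub>F m in sequentially. (SUP s\<in>S m. f m s) < y"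
    by (rule eventually_mono) (use big c'(2) in \<open>meson not_less order.strict_trans1 less_imp_le\<close>)
qed

definition stopping_value ::
  "'a measure \<Rightarrow> 'a measure set \<Rightarrow> (nat \<Rightarrow> nat \<Rightarrow> 'a measure) \<Rightarrow> (nat \<Rightarrow> enat) \<Rightarrow>
    (nat \<Rightarrow> nat \<Rightarrow> 'a \<Rightarrow> ennreal) \<Rightarrow> nat \<Rightarrow> ennreal"
where
  "stopping_value M Ps F r E m =
     (SUP \<tau>\<in>ST_fin M Ps (F m) (r m). SUP P\<in>Ps. \<integral>\<^sup>+ \<omega>. stopped E m \<tau> \<omega> \<partial>P)"

definition supermartingale_majorant ::
  "'a measure \<Rightarrow> 'a measure set \<Rightarrow> (nat \<Rightarrow> nat \<Rightarrow> 'a measure) \<Rightarrow> (nat \<Rightarrow> enat) \<Rightarrow>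
    (nat \<Rightarrow> nat \<Rightarrow> 'a \<Rightarrow> ennreal) \<Rightarrow> bool"
where
  "supermartingale_majorant M Ps F r E \<longleftrightarrow>
     (\<exists>(L :: nat \<Rightarrow> nat \<Rightarrow> 'a measure \<Rightarrow> 'a \<Rightarrow> ennreal) (m0::nat).
        (\<forall>P\<in>Ps. \<forall>m n. L m n P \<in> borel_measurable (F m n)) \<and>
        (\<forall>P\<in>Ps. \<forall>m n. AE \<omega> in P. E m n \<omega> \<le> L m n P \<omega>) \<and>
        (\<forall>P\<in>Ps. \<forall>m\<ge>m0. \<forall>n. enat n \<le> r m \<longrightarrow> (\<integral>\<^sup>+ \<omega>. L m n P \<omega> \<partial>P) < \<infinity>) \<and>
        (\<forall>P\<in>Ps. \<forall>m\<ge>m0. \<forall>n. enat (n + 1) \<le> r m \<longrightarrow>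
           (AE \<omega> in P. nn_cond_exp P (F m n) (L m (n + 1) P) \<omega> \<le> L m n P \<omega>)) \<and>
        limsup (\<lambda>m. SUP P\<in>Ps. \<integral>\<^sup>+ \<omega>. L m 0 P \<omega> \<partial>P) \<le> 1)"

lemma prob_filtration_filtration_seq:
  assumes "prob_space P" "sets P = sets M" "filtration_seq M F"
  shows "prob_filtration P (F m)"
proof (intro prob_filtration.intro prob_filtration_axioms.intro assms(1))
  have "space P = space M" using assms(2) by (rule sets_eq_imp_space_eq)
  then show "subalgebra P (F m n)" for n
    using assms(2,3) unfolding filtration_seq_def subalgebra_def by auto
  show "sets (F m n) \<subseteq> sets (F m (Suc n))" for n
    using assms(3) unfolding filtration_seq_def by auto
qed

lemma nn_adapted_process_adapted_seq:
  assumes "prob_space P" "sets P = sets M" "filtration_seq M F" "adapted_seq F E"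
  shows "nn_adapted_process P (F m) (E m)"
proof -
  interpret prob_filtration P "F m" by (rule prob_filtration_filtration_seq[OF assms(1-3)])
  show ?thesis by unfold_locales (use assms(4) in \<open>simp add: adapted_seq_def\<close>)
qed

lemma ST_stopping_time_sets:
  assumes "sets P = sets M" "\<tau> \<in> ST M Ps G \<rho>"
  shows "{\<omega> \<in> space P. \<tau> \<omega> \<le> enat n} \<in> sets (G n)"
  using assms sets_eq_imp_space_eq[OF assms(1)] by (simp add: ST_def is_stopping_time_def)

lemma AE_ST_le:
  assumes "prob_filtration P G" "sets P = sets M" "\<tau> \<in> ST M Ps G \<rho>" "P \<in> Ps"
  shows "AE \<omega> in P. \<tau> \<omega> \<le> \<rho>"
proof -
  interpret prob_filtration P G by (fact assms(1))
  have space: "space P = space M" using assms(2) by (rule sets_eq_imp_space_eq)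
  let ?A = "{\<omega> \<in> space P. \<tau> \<omega> \<le> \<rho>}"
  have A: "?A \<in> sets P"
  proof (cases \<rho>)
    case (enat R)
    then show ?thesis using sets_G_subset[OF ST_stopping_time_sets[OF assms(2,3)]] by simp
  qed simp
  have "emeasure P ?A = 1" using assms(3,4) by (simp add: ST_def space)
  then have "AE \<omega> in P. \<omega> \<in> ?A"
    using A by (intro AE_in_set_eq_1[THEN iffD2]) (simp_all add: emeasure_eq_measure)
  then show ?thesis by (rule eventually_mono) simp
qed

lemma zero_in_ST_fin:
  assumes "\<forall>P\<in>Ps. prob_space P \<and> sets P = sets M" "filtration_seq M F"
  shows "(\<lambda>_. enat 0) \<in> ST_fin M Ps (F m) \<rho>"
proof -
  have "space M \<in> sets (F m n)" for n
    using assms(2) sets.top[of "F m n"] unfolding filtration_seq_def subalgebra_def by auto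
  moreover have "emeasure P (space M) = 1" if "P \<in> Ps" for P
    using assms(1) that sets_eq_imp_space_eq[of P M] prob_space.emeasure_space_1[of P] by auto
  ultimately show ?thesis
    by (simp add: ST_fin_def ST_def is_stopping_time_def flip: zero_enat_def) (metis zero_enat_def)
qed

lemma asym_eprocess_if_supermartingale_majorant:
  assumes probs: "\<forall>P\<in>Ps. prob_space P \<and> sets P = sets M"
    and filt: "filtration_seq M F" and adapt: "adapted_seq F E"
    and majorant: "supermartingale_majorant M Ps F r E"
  shows "asym_eprocess M Ps F r E"
  unfolding asym_eprocess_def
proof (intro conjI ballI)
  obtain L m0 where
    L_adapted: "\<forall>P\<in>Ps. \<forall>m n. L m n P \<in> borel_measurable (F m n)" and
    L_ge: "\<forall>P\<in>Ps. \<forall>m n. AE \<omega> in P. E m n \<omega> \<le> L m n P \<omega>" and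
    L_finite: "\<forall>P\<in>Ps. \<forall>m\<ge>m0. \<forall>n. enat n \<le> r m \<longrightarrow> (\<integral>\<^sup>+ \<omega>. L m n P \<omega> \<partial>P) < \<infinity>" and
    L_super: "\<forall>P\<in>Ps. \<forall>m\<ge>m0. \<forall>n. enat (n + 1) \<le> r m \<longrightarrow>
                (AE \<omega> in P. nn_cond_exp P (F m n) (L m (n + 1) P) \<omega> \<le> L m n P \<omega>)" and
    L_limsup: "limsup (\<lambda>m. SUP P\<in>Ps. \<integral>\<^sup>+ \<omega>. L m 0 P \<omega> \<partial>P) \<le> 1"
    using majorant unfolding supermartingale_majorant_def by blast
  fix \<tau> assume \<tau>: "\<tau> \<in> STseq M Ps F r"
  have "(\<integral>\<^sup>+ \<omega>. stopped E m (\<tau> m) \<omega> \<partial>P) \<le> (\<integral>\<^sup>+ \<omega>. L m 0 P \<omega> \<partial>P)"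
    if m: "m0 \<le> m" and P: "P \<in> Ps" for m P
  proof -
    have sets: "sets P = sets M" using probs P by blast
    interpret prob_filtration P "F m"
      using probs P by (intro prob_filtration_filtration_seq[OF _ _ filt]) auto
    have \<tau>m: "\<tau> m \<in> ST M Ps (F m) (r m)" using \<tau> by (simp add: STseq_def)
    show ?thesis
      unfolding stopped_def
    proof (rule nn_integral_stopped_le)
      show "{\<omega> \<in> space P. \<tau> m \<omega> \<le> enat n} \<in> sets (F m n)" for n
        by (rule ST_stopping_time_sets[OF sets \<tau>m])
      show "AE \<omega> in P. \<tau> m \<omega> \<le> r m"
        by (rule AE_ST_le[OF prob_filtration_axioms sets \<tau>m P])
      show "(\<integral>\<^sup>+\<omega>. L m 0 P \<omega> \<partial>P) < \<infinity>"
        using L_finite P m by (auto simp flip: zero_enat_def)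
    qed (use L_adapted L_ge L_super P m in auto)
  qed
  then have "\<forall>\<^sub>F m in sequentially.
      (SUP P\<in>Ps. \<integral>\<^sup>+ \<omega>. stopped E m (\<tau> m) \<omega> \<partial>P) \<le> (SUP P\<in>Ps. \<integral>\<^sup>+ \<omega>. L m 0 P \<omega> \<partial>P)"
    by (auto simp: eventually_sequentially intro!: exI[of _ m0] SUP_mono)
  then have "limsup (\<lambda>m. SUP P\<in>Ps. \<integral>\<^sup>+ \<omega>. stopped E m (\<tau> m) \<omega> \<partial>P)
      \<le> limsup (\<lambda>m. SUP P\<in>Ps. \<integral>\<^sup>+ \<omega>. L m 0 P \<omega> \<partial>P)"
    by (rule Limsup_mono)
  with L_limsup show "limsup (\<lambda>m. SUP P\<in>Ps. \<integral>\<^sup>+ \<omega>. stopped E m (\<tau> m) \<omega> \<partial>P) \<le> 1"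
    by simp
qed (fact adapt)


lemma snell_stop_in_ST_fin:
  assumes probs: "\<forall>P\<in>Ps. prob_space P \<and> sets P = sets M"
    and filt: "filtration_seq M F" and adapt: "adapted_seq F E" and P: "P \<in> Ps"
  shows "(\<lambda>\<omega>. enat (snell_stop P (F m) (E m) (horizon_cap (r m) N) \<omega>)) \<in> ST_fin M Ps (F m) (r m)"
proof -
  interpret nn_adapted_process P "F m" "E m"
    using probs P by (intro nn_adapted_process_adapted_seq[OF _ _ filt adapt]) auto
  let ?h = "horizon_cap (r m) N"
  have space: "space P = space M" using probs P sets_eq_imp_space_eq by blast
  have "enat (snell_stop P (F m) (E m) ?h \<omega>) \<le> r m" for \<omega>
    using snell_stop_le[of ?h \<omega>] horizon_cap_le[of "r m" N] by (meson enat_ord_simps(1) order_trans)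
  moreover have "emeasure P' (space M) = 1" if "P' \<in> Ps" for P'
    using probs that sets_eq_imp_space_eq[of P' M] prob_space.emeasure_space_1[of P'] by auto
  ultimately show ?thesis
    using snell_stop_stopping_time[of ?h] by (simp add: ST_fin_def ST_def is_stopping_time_def space)
qed

lemma nn_integral_snell_lim_le_stopping_value:
  assumes probs: "\<forall>P\<in>Ps. prob_space P \<and> sets P = sets M"
    and filt: "filtration_seq M F" and adapt: "adapted_seq F E" and P: "P \<in> Ps"
  shows "(\<integral>\<^sup>+\<omega>. snell_lim P (F m) (E m) (r m) 0 \<omega> \<partial>P) \<le> stopping_value M Ps F r E m"
proof -
  interpret nn_adapted_process P "F m" "E m"
    using probs P by (intro nn_adapted_process_adapted_seq[OF _ _ filt adapt]) auto
  have "(\<integral>\<^sup>+x. snell P (F m) (E m) (horizon_cap (r m) N) 0 x \<partial>P) \<le> stopping_value M Ps F r E m" for N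
  proof -
    let ?\<tau> = "\<lambda>\<omega>. enat (snell_stop P (F m) (E m) (horizon_cap (r m) N) \<omega>)"
    have "(\<integral>\<^sup>+x. snell P (F m) (E m) (horizon_cap (r m) N) 0 x \<partial>P) = (\<integral>\<^sup>+\<omega>. stopped E m ?\<tau> \<omega> \<partial>P)"
      by (simp add: nn_integral_snell_eq_stopped stopped_def)
    also have "\<dots> \<le> stopping_value M Ps F r E m"
      unfolding stopping_value_def
      by (intro SUP_upper2[OF snell_stop_in_ST_fin[OF probs filt adapt P, where m=m and N=N]]
          SUP_upper P)
    finally show ?thesis .
  qed
  then show ?thesis by (simp add: nn_integral_snell_lim_0 SUP_least)
qed

lemma limsup_stopping_value_le:
  assumes probs: "\<forall>P\<in>Ps. prob_space P \<and> sets P = sets M" and filt: "filtration_seq M F"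
    and fin: "\<forall>\<tau>\<in>STseq_fin M Ps F r. limsup (\<lambda>m. SUP P\<in>Ps. \<integral>\<^sup>+ \<omega>. stopped E m (\<tau> m) \<omega> \<partial>P) \<le> 1"
  shows "limsup (\<lambda>m. stopping_value M Ps F r E m) \<le> 1"
  unfolding stopping_value_def
  by (rule limsup_SUP_le_if_choices) (use zero_in_ST_fin[OF probs filt] fin in \<open>auto simp: STseq_fin_def\<close>)

lemma limsup_nn_integral_snell_lim_le:
  assumes probs: "\<forall>P\<in>Ps. prob_space P \<and> sets P = sets M"
    and filt: "filtration_seq M F" and adapt: "adapted_seq F E"
    and fin: "\<forall>\<tau>\<in>STseq_fin M Ps F r. limsup (\<lambda>m. SUP P\<in>Ps. \<integral>\<^sup>+ \<omega>. stopped E m (\<tau> m) \<omega> \<partial>P) \<le> 1"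
  shows "limsup (\<lambda>m. SUP P\<in>Ps. \<integral>\<^sup>+\<omega>. snell_lim P (F m) (E m) (r m) 0 \<omega> \<partial>P) \<le> 1"
proof -
  have "limsup (\<lambda>m. SUP P\<in>Ps. \<integral>\<^sup>+\<omega>. snell_lim P (F m) (E m) (r m) 0 \<omega> \<partial>P)
      \<le> limsup (\<lambda>m. stopping_value M Ps F r E m)"
    using nn_integral_snell_lim_le_stopping_value[OF probs filt adapt]
    by (intro Limsup_mono always_eventually allI SUP_least) simp
  also have "\<dots> \<le> 1" by (rule limsup_stopping_value_le[OF probs filt fin])
  finally show ?thesis .
qed

lemma supermartingale_majorant_if_fin_stopping:
  assumes probs: "\<forall>P\<in>Ps. prob_space P \<and> sets P = sets M"
    and filt: "filtration_seq M F" and adapt: "adapted_seq F E"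
    and fin: "\<forall>\<tau>\<in>STseq_fin M Ps F r. limsup (\<lambda>m. SUP P\<in>Ps. \<integral>\<^sup>+ \<omega>. stopped E m (\<tau> m) \<omega> \<partial>P) \<le> 1"
  shows "supermartingale_majorant M Ps F r E"
proof -
  let ?S = "\<lambda>P m. snell_lim P (F m) (E m) (r m)"
  have process: "nn_adapted_process P (F m) (E m)" if "P \<in> Ps" for P m
    using probs that by (intro nn_adapted_process_adapted_seq[OF _ _ filt adapt]) auto
  have limsup: "limsup (\<lambda>m. SUP P\<in>Ps. \<integral>\<^sup>+\<omega>. ?S P m 0 \<omega> \<partial>P) \<le> 1"
    by (rule limsup_nn_integral_snell_lim_le[OF probs filt adapt fin])
  moreover have "(1::ennreal) < 2" by simp
  ultimately have "\<forall>\<^sub>F m in sequentially. (SUP P\<in>Ps. \<integral>\<^sup>+\<omega>. ?S P m 0 \<omega> \<partial>P) < 2"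
    unfolding Limsup_le_iff by blast
  then obtain m0 where "\<And>m. m0 \<le> m \<Longrightarrow> (SUP P\<in>Ps. \<integral>\<^sup>+\<omega>. ?S P m 0 \<omega> \<partial>P) < 2"
    by (auto simp: eventually_sequentially)
  then have m0: "\<And>m P. m0 \<le> m \<Longrightarrow> P \<in> Ps \<Longrightarrow> (\<integral>\<^sup>+\<omega>. ?S P m 0 \<omega> \<partial>P) < 2"
    by (meson SUP_upper le_less_trans)
  define L where "L m n P = (if m0 \<le> m \<and> enat n \<le> r m then ?S P m n else E m n)"
    for m n and P :: "'a measure"
    \<comment> \<open>for m < m0 or beyond the horizon, E is its own majorant\<close>
  show ?thesis
    unfolding supermartingale_majorant_def
  proof (intro exI[of _ L] exI[of _ m0] conjI ballI allI impI)
    fix P m n assume P: "P \<in> Ps"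
    interpret nn_adapted_process P "F m" "E m" by (rule process[OF P])
    show "L m n P \<in> borel_measurable (F m n)"
      by (simp add: L_def measurable_snell_lim_G adapted)
    show "AE \<omega> in P. E m n \<omega> \<le> L m n P \<omega>"
      by (simp add: L_def snell_lim_ge)
  next
    fix P m n assume P: "P \<in> Ps" and m: "m0 \<le> m" and n: "enat n \<le> r m"
    interpret nn_adapted_process P "F m" "E m" by (rule process[OF P])
    have "(\<integral>\<^sup>+ \<omega>. L m n P \<omega> \<partial>P) \<le> (\<integral>\<^sup>+ \<omega>. ?S P m 0 \<omega> \<partial>P)"
      using m n by (simp add: L_def nn_integral_snell_lim_le_0)
    also have "\<dots> < \<infinity>" using m0[OF m P] by (simp add: order.strict_trans)
    finally show "(\<integral>\<^sup>+ \<omega>. L m n P \<omega> \<partial>P) < \<infinity>" .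
  next
    fix P m n assume P: "P \<in> Ps" and m: "m0 \<le> m" and n: "enat (n + 1) \<le> r m"
    interpret nn_adapted_process P "F m" "E m" by (rule process[OF P])
    have "enat n \<le> r m" using n by (simp add: order_trans[OF _ n])
    then show "AE \<omega> in P. nn_cond_exp P (F m n) (L m (n + 1) P) \<omega> \<le> L m n P \<omega>"
      using AE_snell_lim_supermartingale[OF n] m n by (simp add: L_def)
  next
    have "\<forall>\<^sub>F m in sequentially. (SUP P\<in>Ps. \<integral>\<^sup>+ \<omega>. L m 0 P \<omega> \<partial>P) = (SUP P\<in>Ps. \<integral>\<^sup>+\<omega>. ?S P m 0 \<omega> \<partial>P)"
      by (auto simp: eventually_sequentially L_def intro!: exI[of _ m0] simp flip: zero_enat_def)
    with limsup show "limsup (\<lambda>m. SUP P\<in>Ps. \<integral>\<^sup>+ \<omega>. L m 0 P \<omega> \<partial>P) \<le> 1"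
      by (simp add: Limsup_eq)
  qed
qed

theorem mainTheorem4:
  fixes M :: "'a measure" and Ps :: "'a measure set"
    and F :: "nat \<Rightarrow> nat \<Rightarrow> 'a measure"
    and E :: "nat \<Rightarrow> nat \<Rightarrow> 'a \<Rightarrow> ennreal"
    and r :: "nat \<Rightarrow> enat"
  assumes probs: "\<forall>P\<in>Ps. prob_space P \<and> sets P = sets M"
    and filt: "filtration_seq M F"
    and adapt: "adapted_seq F E"
  shows "(asym_eprocess M Ps F r E \<longleftrightarrow>
            (\<forall>\<tau>\<in>STseq_fin M Ps F r.
               limsup (\<lambda>m. SUP P\<in>Ps. \<integral>\<^sup>+ \<omega>. stopped E m (\<tau> m) \<omega> \<partial>P) \<le> 1))
       \<and> (asym_eprocess M Ps F r E \<longleftrightarrow>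
            (\<exists>(L :: nat \<Rightarrow> nat \<Rightarrow> 'a measure \<Rightarrow> 'a \<Rightarrow> ennreal) (m0::nat).
               (\<forall>P\<in>Ps. \<forall>m n. L m n P \<in> borel_measurable (F m n)) \<and>
               (\<forall>P\<in>Ps. \<forall>m n. AE \<omega> in P. E m n \<omega> \<le> L m n P \<omega>) \<and>
               (\<forall>P\<in>Ps. \<forall>m\<ge>m0. \<forall>n. enat n \<le> r m \<longrightarrow> (\<integral>\<^sup>+ \<omega>. L m n P \<omega> \<partial>P) < \<infinity>) \<and>
               (\<forall>P\<in>Ps. \<forall>m\<ge>m0. \<forall>n. enat (n + 1) \<le> r m \<longrightarrow>
                  (AE \<omega> in P. nn_cond_exp P (F m n) (L m (n + 1) P) \<omega> \<le> L m n P \<omega>)) \<and>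
               limsup (\<lambda>m. SUP P\<in>Ps. \<integral>\<^sup>+ \<omega>. L m 0 P \<omega> \<partial>P) \<le> 1))"
proof -
  have "STseq_fin M Ps F r \<subseteq> STseq M Ps F r"
    by (auto simp: STseq_fin_def STseq_def ST_fin_def)
  then have "asym_eprocess M Ps F r E \<Longrightarrow>
      \<forall>\<tau>\<in>STseq_fin M Ps F r. limsup (\<lambda>m. SUP P\<in>Ps. \<integral>\<^sup>+ \<omega>. stopped E m (\<tau> m) \<omega> \<partial>P) \<le> 1"
    by (auto simp: asym_eprocess_def)
  moreover note supermartingale_majorant_if_fin_stopping[OF probs filt adapt, of r]
    asym_eprocess_if_supermartingale_majorant[OF probs filt adapt, of r]
  ultimately show ?thesis
    unfolding supermartingale_majorant_def by argo
qed

end
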